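(* All the symmetries $\chi_{2k+1}$, $k = 0, 1, \dots$, are local.
   Context: Consider the Calogero--Bogoyavlenskii--Schiff breaking soliton equation $u_{tx} = 2u_y u_{xx} + 4u_x u_{xy} - u_{xxxy}$. For $\mu=0$, the recursion operator $\Psi = \mathcal{R}_0(\Phi)$ for symmetries of this equation is defined by the system $\Psi_x = 4u_x\Phi_x + 2u_{xx}\Phi - \Phi_{xxx}$, $\Psi_y = \Phi_t - 2u_y\Phi_x + 2u_{xy}\Phi$ (so a priori its action may produce nonlocal objects). Define $\chi_1 := u_x$ and the symmetries $\chi_{2k+3}$ by the iterated action $\mathcal{R}_0(\chi_{2k+1}) = -\chi_{2k+3}$, $k\ge 0$; e.g. $\chi_3 = u_{xxx} - 3u_x^2$, $\chi_5 = u_{5x} - 5(2u_x(u_{xxx}-u_x^2) + u_{xx}^2)$. Since the equation is Lagrangian (with Lagrangian density $\frac12(m u_x^2u_y - u_xu_t + s u_{xx}u_{xy})$ in the appropriate parameter case), its symmetries are simultaneously cosymmetries, and there is an algorithm (Bogoyavlenskii) generating conservation laws associated to the cosymmetries $\chi_{2k+1}$. "Local" means depending only on $t,x,y,u$ and finitely many derivatives of $u$, with no nonlocal variables. *)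

theory Defs
  imports "HOL-Analysis.Analysis"
begin

type_synonym field3 = "real \<Rightarrow> real \<Rightarrow> real \<Rightarrow> real"

definition Dt :: "field3 \<Rightarrow> field3" where
  "Dt f = (\<lambda>t x y. deriv (\<lambda>s. f s x y) t)"
definition Dx :: "field3 \<Rightarrow> field3" where
  "Dx f = (\<lambda>t x y. deriv (\<lambda>s. f t s y) x)"
definition Dy :: "field3 \<Rightarrow> field3" where
  "Dy f = (\<lambda>t x y. deriv (\<lambda>s. f t x s) y)"

definition pd :: "nat \<Rightarrow> nat \<Rightarrow> nat \<Rightarrow> field3 \<Rightarrow> field3" where
  "pd i j l f = (Dt ^^ i) ((Dx ^^ j) ((Dy ^^ l) f))"

definition smooth3 :: "field3 \<Rightarrow> bool" where
  "smooth3 f \<longleftrightarrow> (\<forall>i j l. (\<lambda>p. pd i j l f (fst p) (fst (snd p)) (snd (snd p)))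
        differentiable_on (UNIV :: (real \<times> real \<times> real) set))"

definition jet :: "field3 \<Rightarrow> real \<Rightarrow> real \<Rightarrow> real \<Rightarrow> (nat \<times> nat \<times> nat \<Rightarrow> real)" where
  "jet u t x y = (\<lambda>(i,j,l). pd i j l u t x y)"

type_synonym jetfun = "real \<Rightarrow> real \<Rightarrow> real \<Rightarrow> (nat \<times> nat \<times> nat \<Rightarrow> real) \<Rightarrow> real"

definition local_fun :: "jetfun \<Rightarrow> bool" where
  "local_fun F \<longleftrightarrow> (\<exists>S. finite S \<and> (\<forall>t x y J J'. (\<forall>\<sigma>\<in>S. J \<sigma> = J' \<sigma>) \<longrightarrow> F t x y J = F t x y J'))"

definition eval_on :: "jetfun \<Rightarrow> field3 \<Rightarrow> field3" where
  "eval_on F u = (\<lambda>t x y. F t x y (jet u t x y))"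

definition CBS_solution :: "field3 \<Rightarrow> bool" where
  "CBS_solution u \<longleftrightarrow> smooth3 u \<and>
     (\<forall>t x y. pd 1 1 0 u t x y = 2 * pd 0 0 1 u t x y * pd 0 2 0 u t x y
        + 4 * pd 0 1 0 u t x y * pd 0 1 1 u t x y - pd 0 3 1 u t x y)"

text \<open>Psi = R_0(Phi) for mu = 0 along a solution u:
  Psi_x = 4 u_x Phi_x + 2 u_xx Phi - Phi_xxx,  Psi_y = Phi_t - 2 u_y Phi_x + 2 u_xy Phi.\<close>
definition recursion_R0 :: "field3 \<Rightarrow> field3 \<Rightarrow> field3 \<Rightarrow> bool" where
  "recursion_R0 u Phi Psi \<longleftrightarrow>
     (\<forall>t x y.
        Dx Psi t x y = 4 * pd 0 1 0 u t x y * Dx Phi t x y + 2 * pd 0 2 0 u t x y * Phi t x y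
                       - (Dx ^^ 3) Phi t x y
      \<and> Dy Psi t x y = Dt Phi t x y - 2 * pd 0 0 1 u t x y * Dx Phi t x y
                       + 2 * pd 0 1 1 u t x y * Phi t x y)"

end

(*
  Write v = u_x. The symmetries are the coefficients of a power series
  R = R_0 + R_1 eps + R_2 eps^2 + ... with smooth coefficients and R_0 = 1, determined by
    R^2 = 1 + eps B(R, R),   B(A, C) = A C_xx + C A_xx - A_x C_x - 4 v A C,
  namely chi_k = - R_(k+1) / 2. Comparing coefficients expresses R_(n+1) as a polynomial in
  R_0, ..., R_n and their x-derivatives, so every R_n is a polynomial in finitely many
  x-derivatives of v, i.e. local.
  That the recursion operator maps R_n to - R_(n+1) is read off from derivatives of the
  identity. In x it gives R_x = eps L R with L = d_x^3 - 4 v d_x - 2 v_x. Applying d_y and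
  d_t - 2 u_y d_x instead, and using the CBS equation once, shows that R_y and
  - eps (R_t - 2 u_y R_x + 2 u_xy R) have the same image under the linear map
  F |-> R F - eps B(R, F), which is injective because R_0 = 1.
*)

theory Submission
  imports Defs "HOL-Library.Function_Algebras" "HOL-Computational_Algebra.Formal_Power_Series"
begin

section \<open>Symmetry of mixed partial derivatives\<close>

lemma second_difference_mean_value:
  fixes g gy gxy :: "real \<Rightarrow> real \<Rightarrow> real"
  assumes gy: "\<And>x y. ((\<lambda>s. g x s) has_real_derivative gy x y) (at y)"
    and gxy: "\<And>x y. ((\<lambda>s. gy s y) has_real_derivative gxy x y) (at x)"
    and "0 < h" "0 < k"
  obtains \<xi> \<eta> where "a < \<xi>" "\<xi> < a + h" "b < \<eta>" "\<eta> < b + k"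
    and "g (a + h) (b + k) - g (a + h) b - g a (b + k) + g a b = h * k * gxy \<xi> \<eta>"
proof -
  obtain \<eta> where \<eta>: "b < \<eta>" "\<eta> < b + k"
    and eq_\<eta>: "(g (a + h) (b + k) - g a (b + k)) - (g (a + h) b - g a b) = k * (gy (a + h) \<eta> - gy a \<eta>)"
    using MVT2[of b "b + k" "\<lambda>s. g (a + h) s - g a s" "\<lambda>s. gy (a + h) s - gy a s"] \<open>0 < k\<close> gy
    by (auto intro!: derivative_eq_intros)
  obtain \<xi> where \<xi>: "a < \<xi>" "\<xi> < a + h" and eq_\<xi>: "gy (a + h) \<eta> - gy a \<eta> = h * gxy \<xi> \<eta>"
    using MVT2[of a "a + h" "\<lambda>s. gy s \<eta>" "\<lambda>s. gxy s \<eta>"] \<open>0 < h\<close> gxy by auto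
  show thesis
    by (rule that[OF \<xi> \<eta>]) (use eq_\<eta> eq_\<xi> in \<open>simp add: algebra_simps\<close>)
qed

lemma DERIV_difference_quotient_at_right:
  assumes "(f has_real_derivative f') (at x)"
  shows "((\<lambda>h. (f (x + h) - f x) / h) \<longlongrightarrow> f') (at_right 0)"
  using assms unfolding DERIV_def by (rule tendsto_mono[rotated]) (simp add: at_within_le_at)

lemma tendsto_at_right_abs_diff_le:
  fixes f :: "real \<Rightarrow> real"
  assumes "(f \<longlongrightarrow> l) (at_right 0)" "0 < d" "\<And>h. 0 < h \<Longrightarrow> h < d \<Longrightarrow> \<bar>f h - z\<bar> \<le> e"
  shows "\<bar>l - z\<bar> \<le> e"
proof (rule tendsto_upperbound)
  show "((\<lambda>h. \<bar>f h - z\<bar>) \<longlongrightarrow> \<bar>l - z\<bar>) (at_right 0)"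
    by (intro tendsto_intros assms(1))
  show "\<forall>\<^sub>F h in at_right 0. \<bar>f h - z\<bar> \<le> e"
    using eventually_at_right_real[OF \<open>0 < d\<close>] by eventually_elim (use assms(3) in auto)
qed simp

lemma mixed_partials_symmetric:
  fixes g gx gy gxy :: "real \<Rightarrow> real \<Rightarrow> real"
  assumes gx: "\<And>x y. ((\<lambda>s. g s y) has_real_derivative gx x y) (at x)"
    and gy: "\<And>x y. ((\<lambda>s. g x s) has_real_derivative gy x y) (at y)"
    and gxy: "\<And>x y. ((\<lambda>s. gy s y) has_real_derivative gxy x y) (at x)"
    and gxy_cont: "continuous_on UNIV (\<lambda>p. gxy (fst p) (snd p))"
    and gyx: "((\<lambda>s. gx a s) has_real_derivative c) (at b)"
  shows "c = gxy a b"
proof -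
  have "\<bar>c - gxy a b\<bar> \<le> e" if "0 < e" for e
  proof -
    obtain d where "0 < d" and d: "\<And>p. dist p (a, b) < d \<Longrightarrow> \<bar>gxy (fst p) (snd p) - gxy a b\<bar> < e"
      using gxy_cont \<open>0 < e\<close> unfolding continuous_on_iff by (force simp: dist_real_def)
    have rectangle: "\<bar>(g (a + h) (b + k) - g (a + h) b - g a (b + k) + g a b) / (h * k) - gxy a b\<bar> \<le> e"
      if "0 < h" "h < d / 2" "0 < k" "k < d / 2" for h k
    proof -
      obtain \<xi> \<eta> where \<xi>\<eta>: "a < \<xi>" "\<xi> < a + h" "b < \<eta>" "\<eta> < b + k"
        and eq: "g (a + h) (b + k) - g (a + h) b - g a (b + k) + g a b = h * k * gxy \<xi> \<eta>"
        using second_difference_mean_value[OF gy gxy \<open>0 < h\<close> \<open>0 < k\<close>] by blast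
      have "dist (\<xi>, \<eta>) (a, b) \<le> \<bar>dist \<xi> a\<bar> + \<bar>dist \<eta> b\<bar>"
        unfolding dist_Pair_Pair by (rule sqrt_sum_squares_le_sum_abs)
      also have "\<dots> < d" using \<xi>\<eta> that by (simp add: dist_real_def)
      finally show ?thesis using d[of "(\<xi>, \<eta>)"] eq that by simp
    qed
    have "\<bar>(gx a (b + k) - gx a b) / k - gxy a b\<bar> \<le> e" if "0 < k" "k < d / 2" for k
    proof (rule tendsto_at_right_abs_diff_le)
      show "((\<lambda>h. ((g (a + h) (b + k) - g a (b + k)) / h - (g (a + h) b - g a b) / h) / k)
          \<longlongrightarrow> (gx a (b + k) - gx a b) / k) (at_right 0)"
        using gx[where x = a and y = "b + k", THEN DERIV_difference_quotient_at_right]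
          gx[where x = a and y = b, THEN DERIV_difference_quotient_at_right]
        by (intro tendsto_intros) (use \<open>0 < k\<close> in auto)
      show "\<bar>((g (a + h) (b + k) - g a (b + k)) / h - (g (a + h) b - g a b) / h) / k - gxy a b\<bar> \<le> e"
        if "0 < h" "h < d / 2" for h
      proof -
        have "((g (a + h) (b + k) - g a (b + k)) / h - (g (a + h) b - g a b) / h) / k
            = (g (a + h) (b + k) - g (a + h) b - g a (b + k) + g a b) / (h * k)"
          using \<open>0 < h\<close> \<open>0 < k\<close> by (simp add: field_simps)
        then show ?thesis using rectangle[of h k] that \<open>0 < k\<close> \<open>k < d / 2\<close> by simp
      qed
    qed (use \<open>0 < d\<close> in simp)
    then show ?thesis
      by (intro tendsto_at_right_abs_diff_le[OF DERIV_difference_quotient_at_right[OF gyx], of "d / 2"])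
         (use \<open>0 < d\<close> in auto)
  qed
  then show ?thesis
    by (metis abs_le_zero_iff add.left_neutral eq_iff_diff_eq_0 field_le_epsilon)
qed

section \<open>Smooth functions of (t, x, y)\<close>

lemma field3_constants:
  "(numeral n :: field3) = (\<lambda>_ _ _. numeral n)" "(1 :: field3) = (\<lambda>_ _ _. 1)"
  "(0 :: field3) = (\<lambda>_ _ _. 0)"
  by (simp_all add: fun_eq_iff)

definition uncurry3 :: "field3 \<Rightarrow> real \<times> real \<times> real \<Rightarrow> real" where
  "uncurry3 f = (\<lambda>p. f (fst p) (fst (snd p)) (snd (snd p)))"

definition differentiable3 :: "field3 \<Rightarrow> bool" where
  "differentiable3 f \<longleftrightarrow> uncurry3 f differentiable_on UNIV"

lemma smooth3_iff_differentiable3: "smooth3 f \<longleftrightarrow> (\<forall>i j l. differentiable3 (pd i j l f))"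
  unfolding smooth3_def differentiable3_def uncurry3_def ..

lemma smooth3_imp_differentiable3: "smooth3 f \<Longrightarrow> differentiable3 f"
  unfolding smooth3_iff_differentiable3 by (metis pd_def funpow_0)

lemma differentiable3_add: "differentiable3 a \<Longrightarrow> differentiable3 b \<Longrightarrow> differentiable3 (a + b)"
  unfolding differentiable3_def uncurry3_def by (simp add: differentiable_on_add)

lemma differentiable3_mult: "differentiable3 a \<Longrightarrow> differentiable3 b \<Longrightarrow> differentiable3 (a * b)"
  unfolding differentiable3_def uncurry3_def by (simp add: differentiable_on_mult)

lemma differentiable3_const: "differentiable3 (\<lambda>_ _ _. c)"
  unfolding differentiable3_def uncurry3_def by simp

lemma differentiable3_uminus: "differentiable3 a \<Longrightarrow> differentiable3 (- a)"
  unfolding differentiable3_def uncurry3_def by simp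

lemma differentiable3_sum: "(\<And>i. i \<in> A \<Longrightarrow> differentiable3 (f i)) \<Longrightarrow> differentiable3 (\<Sum>i\<in>A. f i)"
  by (induction A rule: infinite_finite_induct)
     (auto intro: differentiable3_add simp: zero_fun_def differentiable3_const)

lemma differentiable3_has_partials:
  assumes "differentiable3 f"
  shows "((\<lambda>s. f s x y) has_real_derivative Dt f t x y) (at t)"
    and "((\<lambda>s. f t s y) has_real_derivative Dx f t x y) (at x)"
    and "((\<lambda>s. f t x s) has_real_derivative Dy f t x y) (at y)"
proof -
  have along: "(uncurry3 f \<circ> \<gamma>) differentiable (at s)"
    if "\<gamma> differentiable (at s)" for \<gamma> :: "real \<Rightarrow> real \<times> real \<times> real" and s
    using assms differentiable_chain_at[OF that] unfolding differentiable3_def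
    by (meson UNIV_I differentiable_on_def)
  have curves: "(\<lambda>s. (s, x, y)) differentiable (at t)" "(\<lambda>s. (t, s, y)) differentiable (at x)"
    "(\<lambda>s. (t, x, s)) differentiable (at y)"
    by (rule differentiableI, auto intro!: derivative_eq_intros)+
  have "(\<lambda>s. f s x y) differentiable (at t)" "(\<lambda>s. f t s y) differentiable (at x)"
    "(\<lambda>s. f t x s) differentiable (at y)"
    using along[OF curves(1)] along[OF curves(2)] along[OF curves(3)]
    by (simp_all add: o_def uncurry3_def)
  then show "((\<lambda>s. f s x y) has_real_derivative Dt f t x y) (at t)"
    "((\<lambda>s. f t s y) has_real_derivative Dx f t x y) (at x)"
    "((\<lambda>s. f t x s) has_real_derivative Dy f t x y) (at y)"
    unfolding Dt_def Dx_def Dy_def DERIV_deriv_iff_real_differentiable .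
qed

lemma differentiable3_continuous_on:
  "differentiable3 f \<Longrightarrow> continuous_on UNIV h \<Longrightarrow> continuous_on UNIV (\<lambda>p. uncurry3 f (h p))"
  unfolding differentiable3_def
  by (rule continuous_on_compose2[OF differentiable_imp_continuous_on]) auto

lemma Dx_Dy_commute:
  assumes "differentiable3 g" "differentiable3 (Dx g)" "differentiable3 (Dy g)"
    and "differentiable3 (Dx (Dy g))"
  shows "Dy (Dx g) = Dx (Dy g)"
proof (intro ext)
  fix t x y
  show "Dy (Dx g) t x y = Dx (Dy g) t x y"
  proof (rule mixed_partials_symmetric[where g = "\<lambda>a b. g t a b" and gx = "\<lambda>a b. Dx g t a b"
        and gy = "\<lambda>a b. Dy g t a b" and gxy = "\<lambda>a b. Dx (Dy g) t a b"])
    show "continuous_on UNIV (\<lambda>p. Dx (Dy g) t (fst p) (snd p))"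
      using differentiable3_continuous_on[OF assms(4), of "\<lambda>p. (t, fst p, snd p)"]
      by (simp add: uncurry3_def continuous_intros)
  qed (auto intro: differentiable3_has_partials assms)
qed

lemma Dt_Dx_commute:
  assumes "differentiable3 g" "differentiable3 (Dt g)" "differentiable3 (Dx g)"
    and "differentiable3 (Dt (Dx g))"
  shows "Dx (Dt g) = Dt (Dx g)"
proof (intro ext)
  fix t x y
  show "Dx (Dt g) t x y = Dt (Dx g) t x y"
  proof (rule mixed_partials_symmetric[where g = "\<lambda>a b. g a b y" and gx = "\<lambda>a b. Dt g a b y"
        and gy = "\<lambda>a b. Dx g a b y" and gxy = "\<lambda>a b. Dt (Dx g) a b y"])
    show "continuous_on UNIV (\<lambda>p. Dt (Dx g) (fst p) (snd p) y)"
      using differentiable3_continuous_on[OF assms(4), of "\<lambda>p. (fst p, snd p, y)"]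
      by (simp add: uncurry3_def continuous_intros)
  qed (auto intro: differentiable3_has_partials assms)
qed

lemma Dt_Dy_commute:
  assumes "differentiable3 g" "differentiable3 (Dt g)" "differentiable3 (Dy g)"
    and "differentiable3 (Dt (Dy g))"
  shows "Dy (Dt g) = Dt (Dy g)"
proof (intro ext)
  fix t x y
  show "Dy (Dt g) t x y = Dt (Dy g) t x y"
  proof (rule mixed_partials_symmetric[where g = "\<lambda>a b. g a x b" and gx = "\<lambda>a b. Dt g a x b"
        and gy = "\<lambda>a b. Dy g a x b" and gxy = "\<lambda>a b. Dt (Dy g) a x b"])
    show "continuous_on UNIV (\<lambda>p. Dt (Dy g) (fst p) x (snd p))"
      using differentiable3_continuous_on[OF assms(4), of "\<lambda>p. (fst p, x, snd p)"]
      by (simp add: uncurry3_def continuous_intros)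
  qed (auto intro: differentiable3_has_partials assms)
qed

lemma Dt_pd: "Dt (pd i j l f) = pd (Suc i) j l f"
  by (simp add: pd_def)

lemma Dx_pd: assumes "smooth3 f" shows "Dx (pd i j l f) = pd i (Suc j) l f"
proof (induction i)
  case 0 then show ?case by (simp add: pd_def)
next
  case (Suc i)
  have "Dx (pd (Suc i) j l f) = Dx (Dt (pd i j l f))" by (simp add: Dt_pd)
  also have "\<dots> = Dt (Dx (pd i j l f))"
    by (rule Dt_Dx_commute) (use assms in \<open>simp_all add: smooth3_iff_differentiable3 Suc Dt_pd\<close>)
  also have "\<dots> = pd (Suc i) (Suc j) l f" by (simp add: Suc Dt_pd)
  finally show ?case .
qed

lemma Dy_pd: assumes "smooth3 f" shows "Dy (pd i j l f) = pd i j (Suc l) f"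
proof (induction i)
  case 0
  show ?case
  proof (induction j)
    case 0 then show ?case by (simp add: pd_def)
  next
    case (Suc j)
    have "Dy (pd 0 (Suc j) l f) = Dy (Dx (pd 0 j l f))" by (simp add: Dx_pd assms)
    also have "\<dots> = Dx (Dy (pd 0 j l f))"
      by (rule Dx_Dy_commute) (use assms in \<open>simp_all add: smooth3_iff_differentiable3 Suc Dx_pd\<close>)
    also have "\<dots> = pd 0 (Suc j) (Suc l) f" by (simp add: Suc Dx_pd assms)
    finally show ?case .
  qed
next
  case (Suc i)
  have "Dy (pd (Suc i) j l f) = Dy (Dt (pd i j l f))" by (simp add: Dt_pd)
  also have "\<dots> = Dt (Dy (pd i j l f))"
    by (rule Dt_Dy_commute) (use assms in \<open>simp_all add: smooth3_iff_differentiable3 Suc Dt_pd\<close>)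
  also have "\<dots> = pd (Suc i) j (Suc l) f" by (simp add: Suc Dt_pd)
  finally show ?case .
qed

lemma pd_pd: assumes "smooth3 f" shows "pd i j l (pd a b c f) = pd (a + i) (b + j) (c + l) f"
proof -
  have y: "(Dy ^^ l) (pd a b c f) = pd a b (c + l) f" for l
    by (induction l) (simp_all add: Dy_pd[OF assms])
  have x: "(Dx ^^ j) (pd a b c' f) = pd a (b + j) c' f" for j c'
    by (induction j) (simp_all add: Dx_pd[OF assms])
  have t: "(Dt ^^ i) (pd a' b' c' f) = pd (a' + i) b' c' f" for i a' b' c'
    by (induction i) (simp_all add: Dt_pd)
  show ?thesis unfolding pd_def[of i j l] by (simp add: y x t)
qed

lemma smooth3_pd: "smooth3 f \<Longrightarrow> smooth3 (pd i j l f)"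
  by (simp add: smooth3_iff_differentiable3 pd_pd)

definition coord_partials :: "(field3 \<Rightarrow> field3) set" where
  "coord_partials = {Dt, Dx, Dy}"

lemma coord_partials_simps [simp]: "Dt \<in> coord_partials" "Dx \<in> coord_partials" "Dy \<in> coord_partials"
  by (simp_all add: coord_partials_def)

lemma coord_partial_eq_pd: "Dt f = pd 1 0 0 f" "Dx f = pd 0 1 0 f" "Dy f = pd 0 0 1 f"
  by (simp_all add: pd_def)

lemma smooth3_coord_partial: "D \<in> coord_partials \<Longrightarrow> smooth3 f \<Longrightarrow> smooth3 (D f)"
  unfolding coord_partials_def using smooth3_pd coord_partial_eq_pd by auto

lemma smooth3_partials_commute:
  assumes "smooth3 f"
  shows "Dy (Dx f) = Dx (Dy f)" "Dx (Dt f) = Dt (Dx f)" "Dy (Dt f) = Dt (Dy f)"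
  using assms by (simp_all add: coord_partial_eq_pd pd_pd)

lemma coord_partial_add_mult_uminus:
  assumes "D \<in> coord_partials" "differentiable3 a" "differentiable3 b"
  shows "D (a + b) = D a + D b" and "D (a * b) = D a * b + a * D b" and "D (- a) = - D a"
proof -
  have "D (a + b) t x y = D a t x y + D b t x y
      \<and> D (a * b) t x y = D a t x y * b t x y + a t x y * D b t x y
      \<and> D (- a) t x y = - D a t x y" for t x y
    using assms(1) unfolding coord_partials_def
  proof (elim insertE emptyE)
    assume "D = Dt"
    have "((\<lambda>s. a s x y + b s x y) has_real_derivative Dt a t x y + Dt b t x y) (at t)"
      "((\<lambda>s. a s x y * b s x y) has_real_derivative Dt a t x y * b t x y + a t x y * Dt b t x y) (at t)"
      "((\<lambda>s. - a s x y) has_real_derivative - Dt a t x y) (at t)"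
      using assms(2,3)[THEN differentiable3_has_partials(1)] by (auto intro!: derivative_eq_intros)
    then show ?thesis unfolding \<open>D = Dt\<close> by (auto simp: Dt_def intro!: DERIV_imp_deriv)
  next
    assume "D = Dx"
    have "((\<lambda>s. a t s y + b t s y) has_real_derivative Dx a t x y + Dx b t x y) (at x)"
      "((\<lambda>s. a t s y * b t s y) has_real_derivative Dx a t x y * b t x y + a t x y * Dx b t x y) (at x)"
      "((\<lambda>s. - a t s y) has_real_derivative - Dx a t x y) (at x)"
      using assms(2,3)[THEN differentiable3_has_partials(2)] by (auto intro!: derivative_eq_intros)
    then show ?thesis unfolding \<open>D = Dx\<close> by (auto simp: Dx_def intro!: DERIV_imp_deriv)
  next
    assume "D = Dy"
    have "((\<lambda>s. a t x s + b t x s) has_real_derivative Dy a t x y + Dy b t x y) (at y)"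
      "((\<lambda>s. a t x s * b t x s) has_real_derivative Dy a t x y * b t x y + a t x y * Dy b t x y) (at y)"
      "((\<lambda>s. - a t x s) has_real_derivative - Dy a t x y) (at y)"
      using assms(2,3)[THEN differentiable3_has_partials(3)] by (auto intro!: derivative_eq_intros)
    then show ?thesis unfolding \<open>D = Dy\<close> by (auto simp: Dy_def intro!: DERIV_imp_deriv)
  qed
  then show "D (a + b) = D a + D b" "D (a * b) = D a * b + a * D b" "D (- a) = - D a"
    by (auto simp: fun_eq_iff)
qed

lemma coord_partial_const: "D \<in> coord_partials \<Longrightarrow> D (\<lambda>_ _ _. c) = 0"
  unfolding coord_partials_def by (auto simp: Dt_def Dx_def Dy_def fun_eq_iff)

lemma pd_split_innermost:
  assumes "i + j + l = Suc m"
  obtains D i' j' l' where "D \<in> coord_partials" "i' + j' + l' = m" "\<And>h. pd i j l h = pd i' j' l' (D h)"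
proof -
  have peel: "pd i j (Suc l) h = pd i j l (Dy h)" "pd i (Suc j) 0 h = pd i j 0 (Dx h)"
    "pd (Suc i) 0 0 h = pd i 0 0 (Dt h)" for i j l h
    by (simp_all only: pd_def funpow_Suc_right o_apply funpow_0)
  show thesis
  proof (cases l)
    case (Suc l')
    show thesis by (rule that[of Dy i j l']) (use assms Suc peel in simp_all)
  next
    case 0
    show thesis
    proof (cases j)
      case (Suc j')
      show thesis by (rule that[of Dx i j' 0]) (use assms 0 Suc peel in simp_all)
    next
      case j0: 0
      then obtain i' where "i = Suc i'" using assms 0 by (cases i) auto
      show thesis by (rule that[of Dt i' 0 0]) (use assms 0 j0 \<open>i = Suc i'\<close> peel in simp_all)
    qed
  qed
qed

lemma pd_split_outermost:
  assumes "i + j + l = Suc m"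
  obtains D i' j' l' where "D \<in> coord_partials" "i' + j' + l' = m" "\<And>h. pd i j l h = D (pd i' j' l' h)"
proof (cases i)
  case (Suc i')
  show thesis by (rule that[of Dt i' j l]) (use assms Suc in \<open>simp_all add: pd_def\<close>)
next
  case 0
  show thesis
  proof (cases j)
    case (Suc j')
    show thesis by (rule that[of Dx 0 j' l]) (use assms 0 Suc in \<open>simp_all add: pd_def\<close>)
  next
    case j0: 0
    then obtain l' where "l = Suc l'" using assms 0 by (cases l) auto
    show thesis by (rule that[of Dy 0 0 l']) (use assms 0 j0 \<open>l = Suc l'\<close> in \<open>simp_all add: pd_def\<close>)
  qed
qed

definition smooth_upto :: "nat \<Rightarrow> field3 \<Rightarrow> bool" where
  "smooth_upto n f \<longleftrightarrow> (\<forall>i j l. i + j + l \<le> n \<longrightarrow> differentiable3 (pd i j l f))"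

lemma smooth3_iff_smooth_upto: "smooth3 f \<longleftrightarrow> (\<forall>n. smooth_upto n f)"
  unfolding smooth3_iff_differentiable3 smooth_upto_def by blast

lemma smooth_upto_0: "smooth_upto 0 f \<longleftrightarrow> differentiable3 f"
  by (simp add: smooth_upto_def pd_def)

lemma smooth_upto_SucI:
  assumes "differentiable3 f" "\<And>D. D \<in> coord_partials \<Longrightarrow> smooth_upto n (D f)"
  shows "smooth_upto (Suc n) f"
  unfolding smooth_upto_def
proof (intro allI impI)
  fix i j l assume "i + j + l \<le> Suc n"
  show "differentiable3 (pd i j l f)"
  proof (cases "i + j + l")
    case 0 then show ?thesis using assms(1) by (simp add: pd_def)
  next
    case (Suc m)
    obtain D i' j' l' where "D \<in> coord_partials" "i' + j' + l' = m" "\<And>h. pd i j l h = pd i' j' l' (D h)"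
      using pd_split_innermost[OF Suc] by blast
    then show ?thesis using assms(2) \<open>i + j + l \<le> Suc n\<close> Suc by (simp add: smooth_upto_def)
  qed
qed

lemma pd_add:
  assumes "smooth_upto n a" "smooth_upto n b" "i + j + l \<le> Suc n"
  shows "pd i j l (a + b) = pd i j l a + pd i j l b"
  using assms(3)
proof (induction "i + j + l" arbitrary: i j l)
  case 0 then show ?case by (simp add: pd_def)
next
  case (Suc m)
  obtain D i' j' l' where D: "D \<in> coord_partials" "i' + j' + l' = m" "\<And>h. pd i j l h = D (pd i' j' l' h)"
    using pd_split_outermost[OF Suc(2)[symmetric]] by blast
  have "pd i' j' l' (a + b) = pd i' j' l' a + pd i' j' l' b"
    using Suc D(2) by simp
  moreover have "differentiable3 (pd i' j' l' a)" "differentiable3 (pd i' j' l' b)"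
    using assms(1,2) D(2) Suc by (auto simp: smooth_upto_def)
  ultimately show ?case unfolding D(3) by (simp add: coord_partial_add_mult_uminus(1)[OF D(1)])
qed

lemma smooth_upto_add: "smooth_upto n a \<Longrightarrow> smooth_upto n b \<Longrightarrow> smooth_upto n (a + b)"
  unfolding smooth_upto_def[of n "a + b"]
  by (auto simp: pd_add intro!: differentiable3_add) (auto simp: smooth_upto_def)

lemma smooth3_add: "smooth3 a \<Longrightarrow> smooth3 b \<Longrightarrow> smooth3 (a + b)"
  by (simp add: smooth3_iff_smooth_upto smooth_upto_add)

lemma smooth3_const: "smooth3 (\<lambda>_ _ _. c)"
proof -
  have "smooth_upto n (\<lambda>_ _ _. c)" for n c
  proof (induction n arbitrary: c)
    case 0 then show ?case by (simp add: smooth_upto_0 differentiable3_const)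
  next
    case (Suc n)
    show ?case
      using Suc[of 0]
      by (intro smooth_upto_SucI differentiable3_const) (simp add: coord_partial_const field3_constants)
  qed
  then show ?thesis by (simp add: smooth3_iff_smooth_upto)
qed

lemma smooth_upto_mult: "smooth3 a \<Longrightarrow> smooth3 b \<Longrightarrow> smooth_upto n (a * b)"
proof (induction n arbitrary: a b)
  case 0 then show ?case
    unfolding smooth_upto_0 by (intro differentiable3_mult smooth3_imp_differentiable3)
next
  case (Suc n)
  show ?case
  proof (rule smooth_upto_SucI)
    show "differentiable3 (a * b)" by (intro differentiable3_mult smooth3_imp_differentiable3 Suc.prems)
    fix D assume "D \<in> coord_partials"
    then have "D (a * b) = D a * b + a * D b"
      by (rule coord_partial_add_mult_uminus) (simp_all add: smooth3_imp_differentiable3 Suc.prems)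
    moreover have "smooth_upto n (D a * b)" "smooth_upto n (a * D b)"
      by (rule Suc.IH; simp add: smooth3_coord_partial Suc.prems \<open>D \<in> coord_partials\<close>)+
    ultimately show "smooth_upto n (D (a * b))" by (simp only: smooth_upto_add)
  qed
qed

lemma smooth3_mult: "smooth3 a \<Longrightarrow> smooth3 b \<Longrightarrow> smooth3 (a * b)"
  by (simp add: smooth3_iff_smooth_upto smooth_upto_mult)

lemma coord_partial_diff:
  "D \<in> coord_partials \<Longrightarrow> differentiable3 a \<Longrightarrow> differentiable3 b \<Longrightarrow> D (a - b) = D a - D b"
  using coord_partial_add_mult_uminus(1,3)[of D a "- b"] coord_partial_add_mult_uminus(3)[of D b b]
    differentiable3_uminus[of b]
  by simp

lemma coord_partial_sum:
  assumes "D \<in> coord_partials" "\<And>i. i \<in> A \<Longrightarrow> differentiable3 (f i)"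
  shows "D (\<Sum>i\<in>A. f i) = (\<Sum>i\<in>A. D (f i))"
  using assms(2)
proof (induction A rule: infinite_finite_induct)
  case (insert i A)
  have "D (f i + sum f A) = D (f i) + D (sum f A)"
    by (rule coord_partial_add_mult_uminus(1)[OF assms(1)])
       (use insert in \<open>auto intro: differentiable3_sum\<close>)
  then show ?case using insert by (simp only: sum.insert insert_iff simp_thms)
qed (simp_all add: coord_partial_const[OF assms(1)] field3_constants)

lemma coord_partial_scale:
  assumes "D \<in> coord_partials" "differentiable3 f"
  shows "D (\<lambda>t x y. c * f t x y) = (\<lambda>t x y. c * D f t x y)"
proof -
  have "D ((\<lambda>_ _ _. c) * f) = (\<lambda>_ _ _. c) * D f"
    using coord_partial_add_mult_uminus(2)[OF assms(1) differentiable3_const assms(2)]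
      coord_partial_const[OF assms(1)]
    by simp
  then show ?thesis by (simp add: times_fun_def)
qed

lemma smooth3_uminus: "smooth3 a \<Longrightarrow> smooth3 (- a)"
proof -
  have "- a = (\<lambda>_ _ _. - 1) * a" by (simp add: fun_eq_iff)
  then show "smooth3 a \<Longrightarrow> smooth3 (- a)" by (metis smooth3_mult smooth3_const)
qed

lemma smooth3_diff: "smooth3 a \<Longrightarrow> smooth3 b \<Longrightarrow> smooth3 (a - b)"
  using smooth3_add[of a "- b"] smooth3_uminus by simp

lemma smooth3_sum: "(\<And>i. i \<in> A \<Longrightarrow> smooth3 (f i)) \<Longrightarrow> smooth3 (\<Sum>i\<in>A. f i)"
  by (induction A rule: infinite_finite_induct)
     (auto intro: smooth3_add simp: zero_fun_def smooth3_const)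

lemma smooth3_numeral: "smooth3 (numeral n)" "smooth3 1" "smooth3 0"
  by (simp_all only: field3_constants smooth3_const)

section \<open>Power series with smooth coefficients\<close>

unbundle no vec_syntax
unbundle fps_syntax

definition fps_vanishes_below :: "nat \<Rightarrow> 'a::zero fps \<Rightarrow> bool" where
  "fps_vanishes_below m F \<longleftrightarrow> (\<forall>j<m. F $ j = 0)"

lemma fps_vanishes_below_mult:
  fixes F G :: "'a::comm_semiring_0 fps"
  shows "fps_vanishes_below m G \<Longrightarrow> fps_vanishes_below m (F * G)"
    and "fps_vanishes_below m F \<Longrightarrow> fps_vanishes_below m (F * G)"
  by (auto simp: fps_vanishes_below_def fps_mult_nth intro!: sum.neutral)

lemma fps_vanishes_below_add_diff:
  fixes F G :: "'a::ab_group_add fps"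
  shows "fps_vanishes_below m F \<Longrightarrow> fps_vanishes_below m G \<Longrightarrow> fps_vanishes_below m (F + G)"
    and "fps_vanishes_below m F \<Longrightarrow> fps_vanishes_below m G \<Longrightarrow> fps_vanishes_below m (F - G)"
  by (simp_all add: fps_vanishes_below_def)

lemma fps_eq_0_if_mult_eq_X_mult:
  fixes R F G :: "'a::comm_ring_1 fps"
  assumes "R $ 0 = 1" and "R * F = fps_X * G"
    and "\<And>m. fps_vanishes_below m F \<Longrightarrow> fps_vanishes_below m G"
  shows "F = 0"
proof -
  have "fps_vanishes_below n F" for n
  proof (induction n)
    case 0 then show ?case by (simp add: fps_vanishes_below_def)
  next
    case (Suc n)
    have "(R * F) $ n = R $ 0 * F $ n + (\<Sum>i=Suc 0..n. R $ i * F $ (n - i))"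
      by (simp add: fps_mult_nth sum.atLeast_Suc_atMost)
    also have "(\<Sum>i=Suc 0..n. R $ i * F $ (n - i)) = 0"
      using Suc by (intro sum.neutral) (auto simp: fps_vanishes_below_def)
    finally have "F $ n = (fps_X * G) $ n" using assms(1,2) by simp
    also have "\<dots> = 0" using assms(3)[OF Suc] by (cases n) (auto simp: fps_vanishes_below_def)
    finally show ?case using Suc by (auto simp: fps_vanishes_below_def less_Suc_eq)
  qed
  then show ?thesis by (auto simp: fps_eq_iff fps_vanishes_below_def)
qed

lemma fps_numeral_const_mult_nth:
  "(numeral k * fps_const c * F) $ n = numeral k * c * F $ n"
  by (simp add: numeral_fps_const mult.assoc)

lemma fps_square_nth_Suc:
  fixes A :: "'a::comm_ring_1 fps"
  assumes "A $ 0 = 1"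
  shows "(A * A) $ Suc m = 2 * A $ Suc m + (\<Sum>i=1..m. A $ i * A $ (Suc m - i))"
proof -
  have "(A * A) $ Suc m = (\<Sum>i=0..m. A $ i * A $ (Suc m - i)) + A $ Suc m * A $ 0"
    by (simp only: fps_mult_nth sum.atLeast0_atMost_Suc diff_self_eq_0)
  also have "(\<Sum>i=0..m. A $ i * A $ (Suc m - i)) = A $ 0 * A $ Suc m + (\<Sum>i=1..m. A $ i * A $ (Suc m - i))"
    by (simp only: sum.atLeast_Suc_atMost[OF le0] One_nat_def minus_nat.diff_0)
  finally show ?thesis using assms by (simp add: algebra_simps)
qed

lemma field3_fps_double_cancel: "(2 :: field3 fps) * A = 2 * B \<Longrightarrow> A = B"
  by (simp add: fps_eq_iff fun_eq_iff numeral_fps_const)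

definition smooth_fps :: "field3 fps \<Rightarrow> bool" where
  "smooth_fps F \<longleftrightarrow> (\<forall>n. smooth3 (F $ n))"

definition fps_partial :: "(field3 \<Rightarrow> field3) \<Rightarrow> field3 fps \<Rightarrow> field3 fps" where
  "fps_partial D F = Abs_fps (\<lambda>n. D (F $ n))"

lemma fps_partial_nth [simp]: "fps_partial D F $ n = D (F $ n)"
  by (simp add: fps_partial_def)

lemma smooth_fps_closed [simp]:
  "smooth_fps F \<Longrightarrow> smooth_fps G \<Longrightarrow> smooth_fps (F + G)"
  "smooth_fps F \<Longrightarrow> smooth_fps G \<Longrightarrow> smooth_fps (F - G)"
  "smooth_fps F \<Longrightarrow> smooth_fps G \<Longrightarrow> smooth_fps (F * G)"
  "smooth3 c \<Longrightarrow> smooth_fps (fps_const c)"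
  "smooth_fps fps_X" "smooth_fps 1" "smooth_fps (numeral n)"
  "D \<in> coord_partials \<Longrightarrow> smooth_fps F \<Longrightarrow> smooth_fps (fps_partial D F)"
  unfolding smooth_fps_def
  by (simp_all add: smooth3_add smooth3_diff fps_mult_nth smooth3_sum smooth3_mult
      fps_numeral_nth smooth3_numeral smooth3_coord_partial)

lemma fps_partial_add_diff_mult:
  assumes "D \<in> coord_partials" "smooth_fps F" "smooth_fps G"
  shows "fps_partial D (F + G) = fps_partial D F + fps_partial D G"
    and "fps_partial D (F - G) = fps_partial D F - fps_partial D G"
    and "fps_partial D (F * G) = fps_partial D F * G + F * fps_partial D G"
proof -
  have d: "differentiable3 (F $ n)" "differentiable3 (G $ n)" for n
    using assms(2,3) by (simp_all add: smooth_fps_def smooth3_imp_differentiable3)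
  show "fps_partial D (F + G) = fps_partial D F + fps_partial D G"
    "fps_partial D (F - G) = fps_partial D F - fps_partial D G"
    by (simp_all only: fps_eq_iff fps_add_nth fps_sub_nth fps_partial_nth
        coord_partial_add_mult_uminus(1)[OF assms(1) d] coord_partial_diff[OF assms(1) d] simp_thms allI)
  show "fps_partial D (F * G) = fps_partial D F * G + F * fps_partial D G"
  proof (rule fps_ext)
    fix n
    have "fps_partial D (F * G) $ n = (\<Sum>i=0..n. D (F $ i * G $ (n - i)))"
      unfolding fps_partial_nth fps_mult_nth
      by (rule coord_partial_sum[OF assms(1)]) (simp add: differentiable3_mult d)
    also have "\<dots> = (\<Sum>i=0..n. D (F $ i) * G $ (n - i) + F $ i * D (G $ (n - i)))"
      by (simp only: coord_partial_add_mult_uminus(2)[OF assms(1) d])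
    finally show "fps_partial D (F * G) $ n = (fps_partial D F * G + F * fps_partial D G) $ n"
      by (simp only: fps_add_nth fps_mult_nth fps_partial_nth sum.distrib)
  qed
qed

lemma fps_partial_const:
  assumes "D \<in> coord_partials"
  shows "fps_partial D (fps_const c) = fps_const (D c)"
    and "fps_partial D fps_X = 0" "fps_partial D 1 = 0" "fps_partial D (numeral n) = 0"
proof -
  have "D 0 = 0" "D 1 = 0" "D (numeral n) = 0"
    by (simp_all only: field3_constants coord_partial_const[OF assms])
  then show "fps_partial D (fps_const c) = fps_const (D c)" "fps_partial D fps_X = 0"
    "fps_partial D 1 = 0" "fps_partial D (numeral n) = 0"
    by (simp_all add: fps_eq_iff fps_numeral_nth fun_eq_iff)
qed

lemma fps_partial_vanishes_below:
  "D \<in> coord_partials \<Longrightarrow> fps_vanishes_below m F \<Longrightarrow> fps_vanishes_below m (fps_partial D F)"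
  by (simp add: fps_vanishes_below_def field3_constants coord_partial_const)

lemma fps_partials_commute:
  assumes "smooth_fps F"
  shows "fps_partial Dy (fps_partial Dx F) = fps_partial Dx (fps_partial Dy F)"
    and "fps_partial Dt (fps_partial Dx F) = fps_partial Dx (fps_partial Dt F)"
  using assms by (simp_all add: fps_eq_iff smooth_fps_def smooth3_partials_commute)

section \<open>The resolvent of a CBS solution\<close>

text \<open>Keep the coefficients \<open>fps_const c\<close> atomic, so that \<open>algebra_simps\<close> can normalise
  the identities of the resolvent.\<close>
declare fps_const_neg [simp del] fps_const_add [simp del] fps_const_sub [simp del]
  fps_const_mult [simp del] fps_const_power [simp del]
declare smooth3_coord_partial [simp]

lemmas fps_partial_simps = fps_partial_add_diff_mult fps_partial_const

lemma recursion_R0_scale: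
  assumes "smooth3 Phi" "smooth3 Psi" "recursion_R0 u Phi Psi"
  shows "recursion_R0 u (\<lambda>t x y. c * Phi t x y) (\<lambda>t x y. c * Psi t x y)"
proof -
  have d: "differentiable3 Phi" "differentiable3 (Dx Phi)" "differentiable3 (Dx (Dx Phi))"
    "differentiable3 Psi"
    using assms(1,2) by (simp_all add: smooth3_imp_differentiable3)
  have D3: "(Dx ^^ 3) f = Dx (Dx (Dx f))" for f by (simp add: eval_nat_numeral)
  show ?thesis
    unfolding recursion_R0_def D3
  proof (intro allI conjI)
    fix t x y
    have eqs: "Dx Psi t x y = 4 * pd 0 1 0 u t x y * Dx Phi t x y + 2 * pd 0 2 0 u t x y * Phi t x y
        - Dx (Dx (Dx Phi)) t x y"
      "Dy Psi t x y
        = Dt Phi t x y - 2 * pd 0 0 1 u t x y * Dx Phi t x y + 2 * pd 0 1 1 u t x y * Phi t x y"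
      using assms(3) by (simp_all add: recursion_R0_def D3)
    show "Dx (\<lambda>t x y. c * Psi t x y) t x y
        = 4 * pd 0 1 0 u t x y * Dx (\<lambda>t x y. c * Phi t x y) t x y
          + 2 * pd 0 2 0 u t x y * (c * Phi t x y) - Dx (Dx (Dx (\<lambda>t x y. c * Phi t x y))) t x y"
      "Dy (\<lambda>t x y. c * Psi t x y) t x y
        = Dt (\<lambda>t x y. c * Phi t x y) t x y - 2 * pd 0 0 1 u t x y * Dx (\<lambda>t x y. c * Phi t x y) t x y
          + 2 * pd 0 1 1 u t x y * (c * Phi t x y)"
      by (simp_all only: coord_partial_scale d coord_partials_simps) (simp_all add: eqs algebra_simps)
  qed
qed

locale CBS =
  fixes u :: field3
  assumes solution: "CBS_solution u"
begin

definition ux :: field3 where "ux = Dx u"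
definition uy :: field3 where "uy = Dy u"
definition uxy :: field3 where "uxy = Dx uy"

lemma smooth3_u: "smooth3 u"
  using solution by (simp add: CBS_solution_def)

lemma smooth3_u_derivatives [simp]: "smooth3 ux" "smooth3 uy" "smooth3 uxy"
  unfolding ux_def uy_def uxy_def using smooth3_u by simp_all

lemma Dy_ux: "Dy ux = uxy"
  unfolding ux_def uxy_def uy_def using smooth3_partials_commute(1)[OF smooth3_u] by simp

lemma pd_u:
  "pd 0 1 0 u = ux" "pd 0 2 0 u = Dx ux" "pd 0 3 1 u = Dx (Dx uxy)"
  "pd 0 0 1 u = uy" "pd 0 1 1 u = uxy" "pd 1 1 0 u = Dt ux"
  by (simp_all add: pd_def ux_def uy_def uxy_def eval_nat_numeral)

lemma CBS_equation: "Dt ux = 2 * uy * Dx ux + 4 * ux * uxy - Dx (Dx uxy)"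
  using solution unfolding CBS_solution_def pd_u by (simp add: fun_eq_iff)

definition resolvent_form :: "field3 fps \<Rightarrow> field3 fps \<Rightarrow> field3 fps" where
  "resolvent_form A C = A * fps_partial Dx (fps_partial Dx C) + C * fps_partial Dx (fps_partial Dx A)
     - fps_partial Dx A * fps_partial Dx C - 4 * fps_const ux * A * C"

definition lenard :: "field3 fps \<Rightarrow> field3 fps" where
  "lenard A = fps_partial Dx (fps_partial Dx (fps_partial Dx A))
     - 4 * fps_const ux * fps_partial Dx A - 2 * fps_const (Dx ux) * A"

definition transport :: "field3 fps \<Rightarrow> field3 fps" where
  "transport A = fps_partial Dt A - 2 * fps_const uy * fps_partial Dx A"

lemma smooth_fps_resolvent_form_transport [simp]:
  "smooth_fps A \<Longrightarrow> smooth_fps C \<Longrightarrow> smooth_fps (resolvent_form A C)"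
  "smooth_fps A \<Longrightarrow> smooth_fps (transport A)"
  by (simp_all add: resolvent_form_def transport_def)

lemma resolvent_form_sym: "resolvent_form A C = resolvent_form C A"
  by (simp add: resolvent_form_def algebra_simps)

lemma resolvent_form_add:
  "smooth_fps A \<Longrightarrow> smooth_fps F \<Longrightarrow> smooth_fps G
    \<Longrightarrow> resolvent_form A (F + G) = resolvent_form A F + resolvent_form A G"
  by (simp add: resolvent_form_def fps_partial_simps algebra_simps)

lemma resolvent_form_scale:
  assumes "smooth_fps A" "smooth_fps F"
  shows "resolvent_form A (fps_X * F) = fps_X * resolvent_form A F"
    and "resolvent_form A (2 * F) = 2 * resolvent_form A F"
  using assms by (simp_all add: resolvent_form_def fps_partial_simps algebra_simps)

lemma Dx_resolvent_form_diag:
  "smooth_fps A \<Longrightarrow> fps_partial Dx (resolvent_form A A) = 2 * A * lenard A"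
  by (simp add: resolvent_form_def lenard_def fps_partial_simps algebra_simps)

lemma Dy_resolvent_form:
  assumes "smooth_fps A" "smooth_fps C"
  shows "fps_partial Dy (resolvent_form A C)
    = resolvent_form (fps_partial Dy A) C + resolvent_form A (fps_partial Dy C)
      - 4 * fps_const uxy * A * C"
  using assms
  by (simp add: resolvent_form_def fps_partial_simps fps_partials_commute Dy_ux algebra_simps)

lemma transport_mult:
  "smooth_fps A \<Longrightarrow> smooth_fps C \<Longrightarrow> transport (A * C) = transport A * C + A * transport C"
  by (simp add: transport_def fps_partial_simps algebra_simps)

lemma transport_1_add_X_mult: "smooth_fps F \<Longrightarrow> transport (1 + fps_X * F) = fps_X * transport F"
  by (simp add: transport_def fps_partial_simps algebra_simps)

text \<open>The only use of the CBS equation.\<close>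
lemma transport_resolvent_form_diag:
  assumes "smooth_fps A"
  shows "transport (resolvent_form A A)
    = 2 * resolvent_form A (transport A) + 4 * resolvent_form A (fps_const uxy * A)"
proof -
  have CBS_fps: "fps_const (Dt ux)
      = 2 * fps_const uy * fps_const (Dx ux) + 4 * fps_const ux * fps_const uxy
        - fps_const (Dx (Dx uxy))"
    by (simp add: CBS_equation numeral_fps_const fps_const_mult fps_const_add fps_const_sub)
  show ?thesis
    using assms by (simp add: resolvent_form_def transport_def fps_partial_simps fps_partials_commute
        CBS_fps uxy_def[symmetric] algebra_simps)
qed

lemma fps_vanishes_below_resolvent_form:
  "fps_vanishes_below m F \<Longrightarrow> fps_vanishes_below m (resolvent_form A F)"
  unfolding resolvent_form_def
  by (intro fps_vanishes_below_add_diff fps_vanishes_below_mult fps_partial_vanishes_below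
      coord_partials_simps)

lemma resolvent_form_diag_nth:
  "resolvent_form A A $ m = (\<Sum>i=0..m. 2 * (A $ i * Dx (Dx (A $ (m - i))))
     - Dx (A $ i) * Dx (A $ (m - i)) - 4 * (ux * (A $ i * A $ (m - i))))"
proof -
  have form: "resolvent_form A A = fps_const 2 * (A * fps_partial Dx (fps_partial Dx A))
      - fps_partial Dx A * fps_partial Dx A - fps_const (4 * ux) * (A * A)"
    unfolding resolvent_form_def fps_const_mult[symmetric] numeral_fps_const[symmetric]
    by (simp add: algebra_simps)
  have "resolvent_form A A $ m = 2 * (\<Sum>i=0..m. A $ i * Dx (Dx (A $ (m - i))))
      - (\<Sum>i=0..m. Dx (A $ i) * Dx (A $ (m - i))) - 4 * ux * (\<Sum>i=0..m. A $ i * A $ (m - i))"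
    unfolding form fps_sub_nth fps_mult_left_const_nth by (simp only: fps_mult_nth fps_partial_nth)
  then show ?thesis
    by (simp add: sum_subtractf sum_distrib_left mult.assoc)
qed

end

locale CBS_resolvent = CBS +
  fixes R :: "field3 fps"
  assumes smooth_R [simp]: "smooth_fps R"
    and R_0: "R $ 0 = 1"
    and resolvent_equation: "R * R = 1 + fps_X * resolvent_form R R"
begin

definition linearized :: "field3 fps \<Rightarrow> field3 fps" where
  "linearized F = R * F - fps_X * resolvent_form R F"

lemma linearized_eq_0D: "linearized F = 0 \<Longrightarrow> F = 0"
  by (rule fps_eq_0_if_mult_eq_X_mult[OF R_0, of F "resolvent_form R F"])
     (simp_all add: linearized_def fps_vanishes_below_resolvent_form)

lemma linearized_add_X_mult:
  "smooth_fps F \<Longrightarrow> smooth_fps G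
    \<Longrightarrow> linearized (F + fps_X * G) = linearized F + fps_X * linearized G"
  by (simp add: linearized_def resolvent_form_add resolvent_form_scale algebra_simps)

lemma fps_partial_resolvent_equation:
  assumes "D \<in> coord_partials"
  shows "2 * (R * fps_partial D R) = fps_X * fps_partial D (resolvent_form R R)"
proof -
  have "fps_partial D (R * R) = fps_partial D (1 + fps_X * resolvent_form R R)"
    by (simp only: resolvent_equation)
  then show ?thesis using assms by (simp add: fps_partial_simps algebra_simps)
qed

lemma resolvent_Dx: "fps_partial Dx R = fps_X * lenard R"
proof -
  have "2 * (R * (fps_partial Dx R - fps_X * lenard R)) = 2 * (fps_X * 0)"
    using fps_partial_resolvent_equation[of Dx] by (simp add: Dx_resolvent_form_diag algebra_simps)
  then have "R * (fps_partial Dx R - fps_X * lenard R) = fps_X * 0"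
    by (rule field3_fps_double_cancel)
  then have "fps_partial Dx R - fps_X * lenard R = 0"
    by (rule fps_eq_0_if_mult_eq_X_mult[OF R_0]) (simp add: fps_vanishes_below_def)
  then show ?thesis by simp
qed

lemma linearized_Dy: "linearized (fps_partial Dy R) = - (2 * fps_X * fps_const uxy * R * R)"
proof -
  have "2 * linearized (fps_partial Dy R) = 2 * - (2 * fps_X * fps_const uxy * R * R)"
    using fps_partial_resolvent_equation[of Dy]
    by (simp add: linearized_def Dy_resolvent_form resolvent_form_sym[of "fps_partial Dy R" R]
        algebra_simps)
  then show ?thesis by (rule field3_fps_double_cancel)
qed

lemma linearized_transport:
  "linearized (transport R + 2 * (fps_const uxy * R)) = 2 * fps_const uxy * R * R"
proof -
  have "transport (R * R) = transport (1 + fps_X * resolvent_form R R)"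
    by (simp only: resolvent_equation)
  then have "2 * (R * transport R)
      = 2 * (fps_X * (resolvent_form R (transport R) + 2 * resolvent_form R (fps_const uxy * R)))"
    by (simp add: transport_mult transport_1_add_X_mult transport_resolvent_form_diag
        resolvent_form_sym[of "transport R" R] algebra_simps)
  then have "R * transport R
      = fps_X * (resolvent_form R (transport R) + 2 * resolvent_form R (fps_const uxy * R))"
    by (rule field3_fps_double_cancel)
  moreover have "resolvent_form R (transport R + 2 * (fps_const uxy * R))
      = resolvent_form R (transport R) + 2 * resolvent_form R (fps_const uxy * R)"
    by (simp only: resolvent_form_add resolvent_form_scale smooth_R smooth_fps_closed
        smooth_fps_resolvent_form_transport smooth3_u_derivatives)
  ultimately show ?thesis
    by (simp add: linearized_def algebra_simps)
qed

lemma resolvent_Dy: "fps_partial Dy R = - (fps_X * (transport R + 2 * (fps_const uxy * R)))"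
proof -
  have "linearized (fps_partial Dy R + fps_X * (transport R + 2 * (fps_const uxy * R)))
      = linearized (fps_partial Dy R) + fps_X * linearized (transport R + 2 * (fps_const uxy * R))"
    by (rule linearized_add_X_mult) simp_all
  also have "\<dots> = 0"
    by (simp only: linearized_Dy linearized_transport) (simp add: algebra_simps)
  finally have "fps_partial Dy R + fps_X * (transport R + 2 * (fps_const uxy * R)) = 0"
    by (rule linearized_eq_0D)
  then show ?thesis by (simp add: eq_neg_iff_add_eq_0)
qed

lemma resolvent_Dx_Suc:
  "Dx (R $ Suc n) = Dx (Dx (Dx (R $ n))) - 4 * ux * Dx (R $ n) - 2 * Dx ux * R $ n"
  using arg_cong[OF resolvent_Dx, of "\<lambda>F. F $ Suc n"]
  by (simp add: lenard_def fps_numeral_const_mult_nth)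

lemma resolvent_Dy_Suc:
  "Dy (R $ Suc n) = - (Dt (R $ n) - 2 * uy * Dx (R $ n) + 2 * uxy * R $ n)"
  using arg_cong[OF resolvent_Dy, of "\<lambda>F. F $ Suc n"]
  by (simp add: transport_def fps_numeral_const_mult_nth)

lemma recursion_R0_resolvent: "recursion_R0 u (R $ n) (- (R $ Suc n))"
proof -
  have "differentiable3 (R $ Suc n)"
    using smooth_R by (simp add: smooth_fps_def smooth3_imp_differentiable3)
  then have "Dx (- (R $ Suc n)) = - Dx (R $ Suc n)" "Dy (- (R $ Suc n)) = - Dy (R $ Suc n)"
    by (simp_all only: coord_partial_add_mult_uminus(3) coord_partials_simps)
  then show ?thesis
    unfolding recursion_R0_def pd_u
    by (simp add: resolvent_Dx_Suc resolvent_Dy_Suc eval_nat_numeral)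
qed

end

section \<open>Polynomials in the x-derivatives of u\<close>

text \<open>\<open>XVar j\<close> stands for the \<open>(j+1)\<close>-st x-derivative of \<open>u\<close>.\<close>
datatype xpoly = XConst real | XVar nat | XAdd xpoly xpoly | XMul xpoly xpoly

fun xpoly_eval :: "xpoly \<Rightarrow> (nat \<times> nat \<times> nat \<Rightarrow> real) \<Rightarrow> real" where
  "xpoly_eval (XConst c) J = c"
| "xpoly_eval (XVar j) J = J (0, Suc j, 0)"
| "xpoly_eval (XAdd p q) J = xpoly_eval p J + xpoly_eval q J"
| "xpoly_eval (XMul p q) J = xpoly_eval p J * xpoly_eval q J"

fun xpoly_Dx :: "xpoly \<Rightarrow> xpoly" where
  "xpoly_Dx (XConst c) = XConst 0"
| "xpoly_Dx (XVar j) = XVar (Suc j)"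
| "xpoly_Dx (XAdd p q) = XAdd (xpoly_Dx p) (xpoly_Dx q)"
| "xpoly_Dx (XMul p q) = XAdd (XMul (xpoly_Dx p) q) (XMul p (xpoly_Dx q))"

fun xpoly_vars :: "xpoly \<Rightarrow> nat set" where
  "xpoly_vars (XConst c) = {}"
| "xpoly_vars (XVar j) = {j}"
| "xpoly_vars (XAdd p q) = xpoly_vars p \<union> xpoly_vars q"
| "xpoly_vars (XMul p q) = xpoly_vars p \<union> xpoly_vars q"

definition xpoly_sum :: "xpoly list \<Rightarrow> xpoly" where
  "xpoly_sum ps = foldr XAdd ps (XConst 0)"

definition jetfun_of :: "xpoly \<Rightarrow> jetfun" where
  "jetfun_of p = (\<lambda>_ _ _. xpoly_eval p)"

lemma local_fun_jetfun_of: "local_fun (jetfun_of p)"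
proof -
  have "finite (xpoly_vars p)" by (induction p) auto
  moreover have "xpoly_eval p J = xpoly_eval p J'"
    if "\<forall>\<sigma>\<in>(\<lambda>j. (0, Suc j, 0)) ` xpoly_vars p. J \<sigma> = J' \<sigma>" for J J'
    using that by (induction p) auto
  ultimately show ?thesis unfolding local_fun_def jetfun_of_def by (blast intro: finite_imageI)
qed

lemma eval_on_jetfun_of:
  "eval_on (jetfun_of (XConst c)) u = (\<lambda>_ _ _. c)"
  "eval_on (jetfun_of (XVar j)) u = pd 0 (Suc j) 0 u"
  "eval_on (jetfun_of (XAdd p q)) u = eval_on (jetfun_of p) u + eval_on (jetfun_of q) u"
  "eval_on (jetfun_of (XMul p q)) u = eval_on (jetfun_of p) u * eval_on (jetfun_of q) u"
  by (auto simp: eval_on_def jetfun_of_def jet_def fun_eq_iff)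

lemma eval_on_xpoly_sum:
  "eval_on (jetfun_of (xpoly_sum (map f [a..<b]))) u = (\<Sum>i\<in>{a..<b}. eval_on (jetfun_of (f i)) u)"
proof -
  have "eval_on (jetfun_of (xpoly_sum ps)) u = (\<Sum>p\<leftarrow>ps. eval_on (jetfun_of p) u)" for ps
    unfolding xpoly_sum_def by (induction ps) (auto simp: eval_on_jetfun_of fun_eq_iff)
  then show ?thesis by (simp add: sum_set_upt_conv_sum_list_nat[symmetric] o_def)
qed

lemma smooth3_eval_on_jetfun_of: "smooth3 u \<Longrightarrow> smooth3 (eval_on (jetfun_of p) u)"
  by (induction p) (simp_all add: eval_on_jetfun_of smooth3_const smooth3_pd smooth3_add smooth3_mult)

lemma Dx_eval_on_jetfun_of:
  assumes "smooth3 u"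
  shows "Dx (eval_on (jetfun_of p) u) = eval_on (jetfun_of (xpoly_Dx p)) u"
proof (induction p)
  case (XConst c)
  show ?case by (simp add: eval_on_jetfun_of coord_partial_const field3_constants)
next
  case (XVar j)
  show ?case by (simp add: eval_on_jetfun_of pd_def)
next
  case (XAdd p q)
  then show ?case
    by (simp only: eval_on_jetfun_of xpoly_Dx.simps coord_partial_add_mult_uminus(1) coord_partials_simps
        smooth3_imp_differentiable3 smooth3_eval_on_jetfun_of assms)
next
  case (XMul p q)
  then show ?case
    by (simp only: eval_on_jetfun_of xpoly_Dx.simps coord_partial_add_mult_uminus(2) coord_partials_simps
        smooth3_imp_differentiable3 smooth3_eval_on_jetfun_of assms)
qed

definition xpoly_resolvent_term :: "xpoly \<Rightarrow> xpoly \<Rightarrow> xpoly" where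
  "xpoly_resolvent_term a b =
    XAdd (XAdd (XMul (XConst 2) (XMul a (xpoly_Dx (xpoly_Dx b))))
               (XMul (XConst (-1)) (XMul (xpoly_Dx a) (xpoly_Dx b))))
         (XMul (XConst (-4)) (XMul (XVar 0) (XMul a b)))"

text \<open>Coefficient \<open>n + 1\<close> of \<open>R\<^sup>2 = 1 + \<epsilon> B(R, R)\<close>, solved for \<open>R\<^sub>n\<^sub>+\<^sub>1\<close>, which occurs twice
  on the left (as \<open>R\<^sub>0 R\<^sub>n\<^sub>+\<^sub>1\<close> and \<open>R\<^sub>n\<^sub>+\<^sub>1 R\<^sub>0\<close>); coefficient \<open>n\<close> of \<open>B(R, R)\<close> is the sum
  over \<open>i \<le> n\<close> of \<open>xpoly_resolvent_term R\<^sub>i R\<^sub>n\<^sub>-\<^sub>i\<close>.\<close>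
fun resolvent_coeff :: "nat \<Rightarrow> xpoly" where
  "resolvent_coeff 0 = XConst 1"
| "resolvent_coeff (Suc n) = XMul (XConst (1/2))
     (XAdd
       (xpoly_sum
         (map (\<lambda>i. xpoly_resolvent_term (resolvent_coeff i) (resolvent_coeff (n - i))) [0..<Suc n]))
       (XMul (XConst (-1))
         (xpoly_sum (map (\<lambda>i. XMul (resolvent_coeff i) (resolvent_coeff (Suc n - i))) [1..<Suc n]))))"

declare resolvent_coeff.simps(2) [simp del]

section \<open>Locality of the symmetries\<close>

definition chi :: "nat \<Rightarrow> jetfun" where
  "chi k = jetfun_of (XMul (XConst (- 1 / 2)) (resolvent_coeff (Suc k)))"

lemma chi_0: "chi 0 t x y J = J (0, 1, 0)"
  by (simp add: chi_def jetfun_of_def resolvent_coeff.simps(2) xpoly_sum_def xpoly_resolvent_term_def)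

lemma local_fun_chi: "local_fun (chi k)"
  by (simp add: chi_def local_fun_jetfun_of)

context CBS
begin

definition resolvent :: "field3 fps" where
  "resolvent = Abs_fps (\<lambda>n. eval_on (jetfun_of (resolvent_coeff n)) u)"

lemma resolvent_nth: "resolvent $ n = eval_on (jetfun_of (resolvent_coeff n)) u"
  by (simp add: resolvent_def)

lemma eval_on_xpoly_resolvent_term:
  "eval_on (jetfun_of (xpoly_resolvent_term a b)) u
    = 2 * (eval_on (jetfun_of a) u * Dx (Dx (eval_on (jetfun_of b) u)))
      - Dx (eval_on (jetfun_of a) u) * Dx (eval_on (jetfun_of b) u)
      - 4 * (ux * (eval_on (jetfun_of a) u * eval_on (jetfun_of b) u))"
  by (simp add: xpoly_resolvent_term_def eval_on_jetfun_of Dx_eval_on_jetfun_of[OF smooth3_u]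
      pd_u(1)[unfolded One_nat_def] fun_eq_iff)

lemma resolvent_0: "resolvent $ 0 = 1"
  by (simp add: resolvent_nth eval_on_jetfun_of fun_eq_iff)

lemma resolvent_nth_Suc:
  "2 * resolvent $ Suc m + (\<Sum>i=1..m. resolvent $ i * resolvent $ (Suc m - i))
    = (\<Sum>i=0..m. 2 * (resolvent $ i * Dx (Dx (resolvent $ (m - i))))
        - Dx (resolvent $ i) * Dx (resolvent $ (m - i))
        - 4 * (ux * (resolvent $ i * resolvent $ (m - i))))"
    (is "2 * _ + ?quadratic = ?form")
proof -
  have "?form = (\<Sum>i\<in>{0..<Suc m}.
      eval_on (jetfun_of (xpoly_resolvent_term (resolvent_coeff i) (resolvent_coeff (m - i)))) u)"
    by (simp only: eval_on_xpoly_resolvent_term resolvent_nth atLeastLessThanSuc_atLeastAtMost)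
  moreover have "?quadratic = (\<Sum>i\<in>{1..<Suc m}.
      eval_on (jetfun_of (resolvent_coeff i)) u * eval_on (jetfun_of (resolvent_coeff (Suc m - i))) u)"
    by (simp only: resolvent_nth atLeastLessThanSuc_atLeastAtMost)
  ultimately have "resolvent $ Suc m = (\<lambda>_ _ _. 1 / 2) * (?form + (\<lambda>_ _ _. - 1) * ?quadratic)"
    by (simp only: resolvent_nth resolvent_coeff.simps(2) eval_on_jetfun_of eval_on_xpoly_sum)
  then have "2 * resolvent $ Suc m = ?form - ?quadratic"
    by (simp add: fun_eq_iff mult.commute)
  then show ?thesis by simp
qed

lemma smooth_fps_resolvent: "smooth_fps resolvent"
  by (simp add: smooth_fps_def resolvent_nth smooth3_eval_on_jetfun_of smooth3_u)

lemma resolvent_equation: "resolvent * resolvent = 1 + fps_X * resolvent_form resolvent resolvent"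
proof (rule fps_ext)
  fix n
  show "(resolvent * resolvent) $ n = (1 + fps_X * resolvent_form resolvent resolvent) $ n"
  proof (cases n)
    case 0 then show ?thesis by (simp add: resolvent_0)
  next
    case (Suc m)
    have "(resolvent * resolvent) $ Suc m = resolvent_form resolvent resolvent $ m"
      unfolding fps_square_nth_Suc[OF resolvent_0] resolvent_nth_Suc resolvent_form_diag_nth ..
    then show ?thesis using Suc by simp
  qed
qed

sublocale CBS_resolvent u resolvent
  by unfold_locales (simp_all add: smooth_fps_resolvent resolvent_0 resolvent_equation)

lemma eval_on_chi: "eval_on (chi k) u = (\<lambda>t x y. - 1 / 2 * (resolvent $ Suc k) t x y)"
  by (simp add: chi_def eval_on_jetfun_of resolvent_nth fun_eq_iff)

lemma smooth3_eval_on_chi: "smooth3 (eval_on (chi k) u)"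
  unfolding chi_def by (rule smooth3_eval_on_jetfun_of[OF smooth3_u])

lemma recursion_R0_chi:
  "recursion_R0 u (eval_on (chi k) u) (\<lambda>t x y. - eval_on (chi (Suc k)) u t x y)"
proof -
  have "smooth3 (resolvent $ n)" for n
    using smooth_R by (simp add: smooth_fps_def)
  then have "recursion_R0 u (\<lambda>t x y. - 1 / 2 * (resolvent $ Suc k) t x y)
      (\<lambda>t x y. - 1 / 2 * (- (resolvent $ Suc (Suc k))) t x y)"
    by (intro recursion_R0_scale recursion_R0_resolvent smooth3_uminus)
  then show ?thesis by (simp add: eval_on_chi)
qed

end

theorem proposition2:
  "\<exists>chi :: nat \<Rightarrow> jetfun.
      (\<forall>t x y J. chi 0 t x y J = J (0, 1, 0))
    \<and> (\<forall>k. local_fun (chi k))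
    \<and> (\<forall>k u. CBS_solution u \<longrightarrow>
          smooth3 (eval_on (chi k) u)
        \<and> recursion_R0 u (eval_on (chi k) u) (\<lambda>t x y. - eval_on (chi (Suc k)) u t x y))"
proof (intro exI[of _ chi] conjI allI impI)
  show "chi 0 t x y J = J (0, 1, 0)" for t x y J by (rule chi_0)
  show "local_fun (chi k)" for k by (rule local_fun_chi)
  fix k u assume "CBS_solution u"
  then interpret CBS u by (rule CBS.intro)
  show "smooth3 (eval_on (chi k) u)" by (rule smooth3_eval_on_chi)
  show "recursion_R0 u (eval_on (chi k) u) (\<lambda>t x y. - eval_on (chi (Suc k)) u t x y)"
    by (rule recursion_R0_chi)
qed

end
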